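(* Let $g_i\neq0$, $\sigma_i>0$, $M\ge1$, and let $\tilde g_{1,i},\dots,\tilde g_{M,i}$ be independent real random variables, each with mean $g_i$, variance at most $\sigma_i^2$, and with $\tilde g_{m,i}-g_i$ having a unimodal distribution symmetric about $0$. Then $$|g_i|\;\mathbb{P}\Big[\mathrm{sign}\Big(\sum_{m=1}^M\mathrm{sign}(\tilde g_{m,i})\Big)\neq\mathrm{sign}(g_i)\Big]\le\frac{\sigma_i}{\sqrt M}.$$ More precisely, if $Z$ denotes the number of $m$ with $\mathrm{sign}(\tilde g_{m,i})=\mathrm{sign}(g_i)$ and $S=|g_i|/\sigma_i$, then $\mathbb{P}[Z\le M/2]\le\frac{1}{\sqrt M\,S}$.
   Context: $\mathrm{sign}(t)=1$ for $t>0$, $-1$ for $t<0$, $0$ for $t=0$. A real distribution is unimodal if its distribution function is convex on $(-\infty,\nu)$ and concave on $(\nu,\infty)$ for some mode $\nu$. *)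

theory Defs
  imports "HOL-Probability.Probability"
begin

definition unimodal :: "real measure \<Rightarrow> bool" where
  "unimodal \<mu> \<longleftrightarrow> (\<exists>\<nu>. convex_on {..<\<nu>} (cdf \<mu>) \<and> concave_on {\<nu><..} (cdf \<mu>))"

definition symmetric0 :: "real measure \<Rightarrow> bool" where
  "symmetric0 \<mu> \<longleftrightarrow> distr \<mu> borel uminus = \<mu>"

end

theory Submission
  imports Defs
begin

text \<open>Fix one worker and let \<open>Y = X - g\<close>. Since \<open>Y\<close> is symmetric and unimodal, its upper tail
  \<open>t \<mapsto> P(Y \<ge> t)\<close> is, up to atoms, a convex function on \<open>(0, \<infinity>)\<close> bounded by \<open>1/2\<close>, and the
  layer-cake formula gives \<open>\<integral>\<^sub>0\<^sup>\<infinity> 4 t P(Y \<ge> t) dt = E Y\<^sup>2 \<le> \<sigma>\<^sup>2\<close>. The tail dominates its supporting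
  line at \<open>|g|\<close>, and the triangle under that line has area at most \<open>\<sigma>\<^sup>2\<close>; this Gauss-type argument shows
  that the worker's sign is wrong with probability at most \<open>1/2 - r\<close>, with the margin
  \<open>r = |g| / (2 \<surd>(g\<^sup>2 + 4 \<sigma>\<^sup>2))\<close>. The workers are independent, so by Cantelli's inequality at most
  half of them vote correctly with probability at most \<open>(1/4 - r\<^sup>2) / (1/4 - r\<^sup>2 + M r\<^sup>2)\<close>, which by
  AM-GM is at most \<open>\<sigma> / (|g| \<surd>M)\<close>. A wrong majority sign needs such a minority of correct votes.\<close>

section \<open>Convex tails with bounded second moment\<close>

text \<open>The two facts below, cleared of denominators: \<open>t \<mapsto> (q + t)\<^sup>3 / t\<^sup>2\<close> attains its minimum
  \<open>27 q / 4\<close> at \<open>t = 2 q\<close> and decreases on \<open>(0, 2 q]\<close>.\<close>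
lemma cube_amgm:
  fixes q x :: real
  assumes "0 \<le> q" "0 \<le> x"
  shows "27 * q * x\<^sup>2 \<le> 4 * (q + x) ^ 3"
proof -
  have "4 * (q + x) ^ 3 - 27 * q * x\<^sup>2 = (x - 2 * q)\<^sup>2 * (4 * x + q)"
    by (simp add: power2_eq_square power3_eq_cube algebra_simps)
  moreover have "(x - 2 * q)\<^sup>2 * (4 * x + q) \<ge> 0"
    using assms by simp
  ultimately show ?thesis by linarith
qed

lemma cube_over_square_antimono:
  fixes q x d :: real
  assumes "0 < q" "0 < x" "x \<le> d" "d \<le> 2 * q"
  shows "x\<^sup>2 * (q + d) ^ 3 \<le> d\<^sup>2 * (q + x) ^ 3"
proof -
  have diff: "d\<^sup>2 * (q + x) ^ 3 - x\<^sup>2 * (q + d) ^ 3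
      = (d - x) * (q ^ 3 * (d + x) + 3 * q\<^sup>2 * d * x - d\<^sup>2 * x\<^sup>2)"
    by (simp add: power2_eq_square power3_eq_cube algebra_simps)
  have "d * x \<le> 2 * q * x" "d * x \<le> 2 * q * d"
    using mult_right_mono[of d "2 * q" x] mult_left_mono[of x "2 * q" d] assms by auto
  hence "d * x \<le> q * (d + x)"
    by (simp add: algebra_simps)
  hence "q\<^sup>2 * (d * x) \<le> q ^ 3 * (d + x)"
    using mult_left_mono[of "d * x" "q * (d + x)" "q\<^sup>2"]
    by (simp add: power2_eq_square power3_eq_cube mult.assoc)
  moreover have "d * x \<le> 4 * q\<^sup>2"
    using mult_mono[of d "2 * q" x "2 * q"] assms by (simp add: power2_eq_square)
  hence "0 \<le> (d * x) * (4 * q\<^sup>2 - d * x)"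
    using assms by simp
  ultimately have "0 \<le> q ^ 3 * (d + x) + 3 * q\<^sup>2 * d * x - d\<^sup>2 * x\<^sup>2"
    by (simp add: power2_eq_square algebra_simps)
  hence "0 \<le> (d - x) * (q ^ 3 * (d + x) + 3 * q\<^sup>2 * d * x - d\<^sup>2 * x\<^sup>2)"
    using assms by simp
  thus ?thesis using diff by linarith
qed

lemma triangle_tail_poly_ineq:
  fixes q x :: real
  assumes "0 < q" "0 < x" "x \<le> 1/2 - q"
  shows "3 * x\<^sup>2 * q * (1 - q) \<le> 8 * (q + x) ^ 3 * (1/2 - q)\<^sup>2"
proof (cases "1/2 - q \<le> 2 * q")
  case True
  have "x\<^sup>2 \<le> 8 * (q + x) ^ 3 * (1/2 - q)\<^sup>2"
    using cube_over_square_antimono[of q x "1/2 - q"] True assms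
    by (simp add: power3_eq_cube algebra_simps)
  moreover have "3 * q * (1 - q) \<le> 1"
    using zero_le_power2[of "q - 1/2"] by (simp add: power2_eq_square algebra_simps)
  hence "3 * x\<^sup>2 * q * (1 - q) \<le> x\<^sup>2"
    using mult_left_mono[of "3 * q * (1 - q)" 1 "x\<^sup>2"] by (simp add: algebra_simps)
  ultimately show ?thesis by linarith
next
  case False
  define d where "d = 1/2 - q"
  have d: "d > 1/3" using False d_def by simp
  have "1 - q \<le> 18 * d\<^sup>2"
    using mult_right_mono[of "1/3" d d] d d_def unfolding power2_eq_square by linarith
  hence "3 * x\<^sup>2 * q * (1 - q) \<le> (27 * q * x\<^sup>2) * (2 * d\<^sup>2)"
    using mult_left_mono[of "1 - q" "18 * d\<^sup>2" "3 * x\<^sup>2 * q"] assms by (simp add: algebra_simps)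
  also have "\<dots> \<le> (4 * (q + x) ^ 3) * (2 * d\<^sup>2)"
    using cube_amgm[of q x] assms by (intro mult_right_mono) auto
  finally show ?thesis by (simp add: d_def algebra_simps)
qed

lemma margin_le_iff:
  fixes a V d :: real
  assumes a: "0 < a" and V: "0 \<le> V" and d: "0 \<le> d"
  shows "a / (2 * sqrt (a\<^sup>2 + 4 * V)) \<le> d \<longleftrightarrow> a\<^sup>2 * (1/4 - d\<^sup>2) \<le> 4 * V * d\<^sup>2"
proof -
  have S: "0 < sqrt (a\<^sup>2 + 4 * V)"
    using a V by (simp add: add_pos_nonneg)
  have "a / (2 * sqrt (a\<^sup>2 + 4 * V)) \<le> d \<longleftrightarrow> a \<le> 2 * d * sqrt (a\<^sup>2 + 4 * V)"
    using S by (simp add: divide_le_eq mult_ac)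
  also have "\<dots> \<longleftrightarrow> a\<^sup>2 \<le> (2 * d * sqrt (a\<^sup>2 + 4 * V))\<^sup>2"
    using a d S by (simp add: power2_le_iff_abs_le)
  also have "(2 * d * sqrt (a\<^sup>2 + 4 * V))\<^sup>2 = 4 * d\<^sup>2 * (a\<^sup>2 + 4 * V)"
    using V by (simp add: power_mult_distrib)
  finally show ?thesis
    by (simp add: algebra_simps)
qed

lemma triangle_area_margin:
  fixes q s b V :: real
  assumes q: "0 < q" and s: "0 < s" and b: "0 < b" and V: "0 \<le> V"
    and peak: "q + s * b \<le> 1/2" and area: "2 * (q + s * b) ^ 3 \<le> 3 * s\<^sup>2 * V"
  shows "b / (2 * sqrt (b\<^sup>2 + 4 * V)) \<le> 1/2 - q"
proof -
  have "8 * (q + s * b) ^ 3 * (1/2 - q)\<^sup>2 \<le> 3 * s\<^sup>2 * (4 * V * (1/2 - q)\<^sup>2)"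
    using mult_right_mono[OF area, of "4 * (1/2 - q)\<^sup>2"] by (simp add: algebra_simps)
  moreover have "3 * (s * b)\<^sup>2 * q * (1 - q) \<le> 8 * (q + s * b) ^ 3 * (1/2 - q)\<^sup>2"
    using triangle_tail_poly_ineq[OF q] s b peak by simp
  ultimately have "3 * s\<^sup>2 * (b\<^sup>2 * (1/4 - (1/2 - q)\<^sup>2)) \<le> 3 * s\<^sup>2 * (4 * V * (1/2 - q)\<^sup>2)"
    by (simp add: power_mult_distrib power2_eq_square algebra_simps)
  hence "b\<^sup>2 * (1/4 - (1/2 - q)\<^sup>2) \<le> 4 * V * (1/2 - q)\<^sup>2"
    using s by simp
  moreover have "0 \<le> 1/2 - q"
    using peak mult_pos_pos[OF s b] by linarith
  ultimately show ?thesis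
    using margin_le_iff[OF b V] by simp
qed

lemma convex_on_supporting_line:
  fixes L :: "real \<Rightarrow> real"
  assumes cv: "convex_on {0<..} L" and b: "b > 0"
  obtains m where "\<And>t. t > 0 \<Longrightarrow> L b + m * (t - b) \<le> L t"
proof -
  define S where "S = (\<lambda>t. (L b - L t) / (b - t)) ` {0<..<b}"
  have slope_le: "y \<le> (L u - L b) / (u - b)" if u: "u > b" and y: "y \<in> S" for u y
  proof -
    obtain t where t: "0 < t" "t < b" "y = (L b - L t) / (b - t)"
      using y unfolding S_def by auto
    have "y = (L t - L b) / (t - b)" "(L u - L b) / (u - b) = (L b - L u) / (b - u)"
      using t(3) by (metis minus_diff_eq minus_divide_divide)+
    thus ?thesis
      using convex_on_slope_le[OF cv, of t u b] t u b by simp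
  qed
  have S_ne: "S \<noteq> {}"
    using b unfolding S_def by auto
  have "bdd_above S"
    using slope_le[of "b + 1"] b unfolding bdd_above_def by auto
  have "L b + Sup S * (t - b) \<le> L t" if t: "t > 0" for t
  proof (cases t b rule: linorder_cases)
    case less
    have "(L b - L t) / (b - t) \<le> Sup S"
      using less t \<open>bdd_above S\<close> unfolding S_def by (auto intro!: cSup_upper)
    thus ?thesis
      using less by (simp add: divide_le_eq algebra_simps)
  next
    case greater
    have "Sup S \<le> (L t - L b) / (t - b)"
      using S_ne slope_le[OF greater] by (rule cSup_least)
    thus ?thesis
      using greater by (simp add: le_divide_eq)
  qed simp
  thus ?thesis by (rule that)
qed

lemma convex_on_reflect:
  fixes f :: "real \<Rightarrow> real"
  assumes "convex_on {..<0} f"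
  shows "convex_on {0<..} (\<lambda>t. f (- t))"
proof (rule convex_onI)
  fix t x y :: real
  assume "0 < t" "t < 1" "x \<in> {0<..}" "y \<in> {0<..}"
  then show "f (- ((1 - t) *\<^sub>R x + t *\<^sub>R y)) \<le> (1 - t) * f (- x) + t * f (- y)"
    using convex_onD[OF assms, of t "- x" "- y"] by simp
qed simp

lemma has_integral_triangle:
  fixes c s :: real
  assumes "c > 0" "s > 0"
  shows "((\<lambda>t. 4 * t * (c - s * t)) has_integral 2 * c ^ 3 / (3 * s\<^sup>2)) {0..c / s}"
proof -
  define F where "F t = 2 * c * t\<^sup>2 - (4 * s / 3) * t ^ 3" for t :: real
  have "((\<lambda>t. 4 * t * (c - s * t)) has_integral F (c / s) - F 0) {0..c / s}"
  proof (rule fundamental_theorem_of_calculus)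
    fix x :: real
    have "(F has_real_derivative 4 * x * (c - s * x)) (at x within {0..c / s})"
      unfolding F_def
      by (rule derivative_eq_intros refl | simp add: algebra_simps power2_eq_square)+
    thus "(F has_vector_derivative 4 * x * (c - s * x)) (at x within {0..c / s})"
      by (simp add: has_real_derivative_iff_has_vector_derivative)
  qed (use assms in simp)
  moreover have "F (c / s) - F 0 = 2 * c ^ 3 / (3 * s\<^sup>2)"
    unfolding F_def using assms by (simp add: field_simps power2_eq_square power3_eq_cube)
  ultimately show ?thesis by simp
qed

lemma nn_integral_triangle_le:
  fixes L :: "real \<Rightarrow> real"
  assumes c: "c > 0" and s: "s > 0" and above: "\<And>t. t > 0 \<Longrightarrow> max 0 (c - s * t) \<le> L t"
  shows "ennreal (2 * c ^ 3 / (3 * s\<^sup>2))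
    \<le> (\<integral>\<^sup>+t. ennreal (indicator {0<..} t * (4 * t * L t)) \<partial>lborel)"
proof -
  have "ennreal (2 * c ^ 3 / (3 * s\<^sup>2))
      = (\<integral>\<^sup>+t. ennreal (indicator {0..c / s} t * (4 * t * (c - s * t))) \<partial>lborel)"
    by (rule nn_integral_has_integral_lebesgue[OF _ has_integral_triangle[OF c s], symmetric])
      (use s in \<open>auto simp: le_divide_eq mult.commute intro!: mult_nonneg_nonneg\<close>)
  also have "\<dots> \<le> (\<integral>\<^sup>+t. ennreal (indicator {0<..} t * (4 * t * L t)) \<partial>lborel)"
  proof (intro nn_integral_mono ennreal_leI)
    fix t :: real
    show "indicator {0..c / s} t * (4 * t * (c - s * t)) \<le> indicator {0<..} t * (4 * t * L t)"
    proof (cases "t > 0")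
      case True
      hence "4 * t * (c - s * t) \<le> 4 * t * L t" "0 \<le> L t"
        using above[of t] by (auto intro!: mult_left_mono)
      thus ?thesis
        using True by (auto simp: indicator_def)
    qed (auto simp: indicator_def)
  qed
  finally show ?thesis .
qed

lemma convex_tail_supporting_line:
  fixes L :: "real \<Rightarrow> real"
  assumes cv: "convex_on {0<..} L" and b: "b > 0" and Lb: "L b > 0" and V: "0 \<le> V"
    and int: "(\<integral>\<^sup>+t. ennreal (indicator {0<..} t * (4 * t * L t)) \<partial>lborel) \<le> ennreal V"
  obtains s where "s > 0" and "\<And>t. t > 0 \<Longrightarrow> L b - s * (t - b) \<le> L t"
proof -
  obtain m where m: "\<And>t. t > 0 \<Longrightarrow> L b + m * (t - b) \<le> L t"
    using convex_on_supporting_line[OF cv b] by blast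
  have "m < 0"
  proof (rule ccontr)
    assume "\<not> m < 0"
    hence Lb_le: "L b \<le> L t" if "b \<le> t" for t
      using m[of t] b that by (smt (verit) mult_nonneg_nonneg)
    define T where "T = b + (V + 1) / (4 * b * L b)"
    have "b \<le> T"
      unfolding T_def using b Lb V by simp
    have "ennreal (V + 1) = ennreal (4 * b * L b) * emeasure lborel {b..T}"
      using \<open>b \<le> T\<close> b Lb V by (simp add: T_def ennreal_mult'[symmetric])
    also have "\<dots> = (\<integral>\<^sup>+t. ennreal (4 * b * L b) * indicator {b..T} t \<partial>lborel)"
      by (simp add: nn_integral_cmult_indicator)
    also have "\<dots> \<le> (\<integral>\<^sup>+t. ennreal (indicator {0<..} t * (4 * t * L t)) \<partial>lborel)"
      using b Lb Lb_le
      by (intro nn_integral_mono) (auto simp: indicator_def intro!: ennreal_leI mult_mono)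
    also have "\<dots> \<le> ennreal V"
      by (rule int)
    finally show False
      using V by simp
  qed
  then show ?thesis
    using m by (intro that[of "- m"]) (auto simp: algebra_simps)
qed

text \<open>The tail lies above its supporting line at \<open>b\<close>, so the triangle under that line, of area
  \<open>2 c\<^sup>3 / (3 s\<^sup>2)\<close> where \<open>c = L b + s b\<close> is its height, has area at most \<open>V\<close>.\<close>
lemma convex_tail_margin:
  fixes L :: "real \<Rightarrow> real"
  assumes cv: "convex_on {0<..} L" and b: "b > 0" and V: "0 \<le> V"
    and bounds: "\<And>t. t > 0 \<Longrightarrow> 0 \<le> L t \<and> L t \<le> 1/2"
    and int: "(\<integral>\<^sup>+t. ennreal (indicator {0<..} t * (4 * t * L t)) \<partial>lborel) \<le> ennreal V"
  shows "b / (2 * sqrt (b\<^sup>2 + 4 * V)) \<le> 1/2 - L b"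
proof (cases "L b = 0")
  case True
  have "b \<le> sqrt (b\<^sup>2 + 4 * V)"
    using V by (intro real_le_rsqrt) simp
  moreover have "0 < sqrt (b\<^sup>2 + 4 * V)"
    using b V by (simp add: add_pos_nonneg)
  ultimately have "b / (2 * sqrt (b\<^sup>2 + 4 * V)) \<le> 1/2"
    by (simp add: divide_le_eq_1_pos)
  thus ?thesis
    using True by simp
next
  case False
  define q where "q = L b"
  have q: "0 < q" "q \<le> 1/2"
    using bounds[OF b] False unfolding q_def by auto
  obtain s where s: "s > 0" and line: "\<And>t. t > 0 \<Longrightarrow> q - s * (t - b) \<le> L t"
    using convex_tail_supporting_line[OF cv b _ V int] q unfolding q_def by blast
  define c where "c = q + s * b"
  have c: "0 < c"
    unfolding c_def using q s b by (simp add: add_pos_pos)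
  have above: "max 0 (c - s * t) \<le> L t" if "t > 0" for t
    using line[OF that] bounds[OF that] unfolding c_def by (simp add: algebra_simps)
  have "c \<le> 1/2"
  proof (rule ccontr)
    assume "\<not> c \<le> 1/2"
    define t where "t = (c - 1/2) / (2 * s)"
    have "t > 0" "s * t = (c - 1/2) / 2"
      using \<open>\<not> c \<le> 1/2\<close> s unfolding t_def by auto
    thus False
      using above[of t] bounds[of t] \<open>\<not> c \<le> 1/2\<close> by auto
  qed
  have "ennreal (2 * c ^ 3 / (3 * s\<^sup>2)) \<le> ennreal V"
    using nn_integral_triangle_le[OF c s above] int by (rule order_trans)
  hence "2 * c ^ 3 \<le> 3 * s\<^sup>2 * V"
    using s V by (simp add: divide_le_eq mult_ac)
  thus ?thesis
    using triangle_area_margin[OF q(1) s b V] \<open>c \<le> 1/2\<close> unfolding q_def c_def by simp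
qed

section \<open>A Gauss-type tail bound for symmetric unimodal variables\<close>

context prob_space
begin

lemma prob_le_eq_cdf:
  assumes [measurable]: "Y \<in> borel_measurable M"
  shows "prob {\<omega>\<in>space M. Y \<omega> \<le> x} = cdf (distr M borel Y) x"
  unfolding cdf_def by (simp add: measure_distr vimage_def Int_def conj_commute)

lemma symmetric0_prob_le_neg:
  assumes [measurable]: "Y \<in> borel_measurable M" and sym: "symmetric0 (distr M borel Y)"
  shows "prob {\<omega>\<in>space M. Y \<omega> \<le> - t} = prob {\<omega>\<in>space M. t \<le> Y \<omega>}"
proof -
  have "distr M borel (\<lambda>\<omega>. - Y \<omega>) = distr M borel Y"
    using sym unfolding symmetric0_def by (subst (asm) distr_distr) (auto simp: comp_def)
  hence "measure (distr M borel Y) {..- t} = measure (distr M borel (\<lambda>\<omega>. - Y \<omega>)) {..- t}"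
    by simp
  thus ?thesis
    by (simp add: measure_distr vimage_def Int_def conj_commute)
qed

lemma symmetric0_prob_abs_ge:
  assumes [measurable]: "Y \<in> borel_measurable M" and sym: "symmetric0 (distr M borel Y)"
    and t: "t > 0"
  shows "prob {\<omega>\<in>space M. t \<le> \<bar>Y \<omega>\<bar>} = 2 * prob {\<omega>\<in>space M. t \<le> Y \<omega>}"
proof -
  have "{\<omega>\<in>space M. t \<le> \<bar>Y \<omega>\<bar>} = {\<omega>\<in>space M. t \<le> Y \<omega>} \<union> {\<omega>\<in>space M. Y \<omega> \<le> - t}"
    by auto
  moreover have "prob ({\<omega>\<in>space M. t \<le> Y \<omega>} \<union> {\<omega>\<in>space M. Y \<omega> \<le> - t})
      = prob {\<omega>\<in>space M. t \<le> Y \<omega>} + prob {\<omega>\<in>space M. Y \<omega> \<le> - t}"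
    using t by (intro finite_measure_Union) auto
  ultimately show ?thesis
    using symmetric0_prob_le_neg[OF assms(1,2)] by simp
qed

lemma symmetric0_prob_ge_le_half:
  assumes "Y \<in> borel_measurable M" and "symmetric0 (distr M borel Y)" and "t > 0"
  shows "prob {\<omega>\<in>space M. t \<le> Y \<omega>} \<le> 1/2"
  using symmetric0_prob_abs_ge[OF assms] prob_le_1[of "{\<omega>\<in>space M. t \<le> \<bar>Y \<omega>\<bar>}"] by simp

text \<open>If the mode is \<open>\<le> 0\<close>, the distribution function is concave on \<open>(0, \<infinity>)\<close>; otherwise, by
  symmetry, the upper tail is the reflected distribution function, which is convex there.\<close>
lemma unimodal_symmetric0_convex_tail:
  assumes [measurable]: "Y \<in> borel_measurable M"
    and uni: "unimodal (distr M borel Y)" and sym: "symmetric0 (distr M borel Y)"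
  obtains L where "convex_on {0<..} L"
    and "\<And>t. t > 0 \<Longrightarrow> prob {\<omega>\<in>space M. t < Y \<omega>} \<le> L t \<and> L t \<le> prob {\<omega>\<in>space M. t \<le> Y \<omega>}"
proof -
  let ?F = "cdf (distr M borel Y)"
  obtain \<nu> where cv: "convex_on {..<\<nu>} ?F" and cc: "concave_on {\<nu><..} ?F"
    using uni unfolding unimodal_def by blast
  show ?thesis
  proof (cases "\<nu> \<le> 0")
    case True
    have "convex_on {0<..} (\<lambda>t. - ?F t)"
      using convex_on_subset[OF cc[unfolded concave_on_def]] True by auto
    hence "convex_on {0<..} (\<lambda>t. 1 + - ?F t)"
      by (intro convex_on_add) (auto simp: convex_on_const)
    moreover have "1 + - ?F t = prob {\<omega>\<in>space M. t < Y \<omega>}" for t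
    proof -
      have "space M - {\<omega>\<in>space M. Y \<omega> \<le> t} = {\<omega>\<in>space M. t < Y \<omega>}"
        by auto
      thus ?thesis
        using prob_compl[of "{\<omega>\<in>space M. Y \<omega> \<le> t}"] by (simp add: prob_le_eq_cdf[symmetric])
    qed
    ultimately show ?thesis
      by (intro that[of "\<lambda>t. 1 + - ?F t"]) (auto intro!: finite_measure_mono)
  next
    case False
    have "convex_on {0<..} (\<lambda>t. ?F (- t))"
      using convex_on_subset[OF cv] False by (intro convex_on_reflect) auto
    moreover have "?F (- t) = prob {\<omega>\<in>space M. t \<le> Y \<omega>}" for t
      using symmetric0_prob_le_neg[OF _ sym] by (simp add: prob_le_eq_cdf[symmetric])
    ultimately show ?thesis
      by (intro that[of "\<lambda>t. ?F (- t)"]) (auto intro!: finite_measure_mono)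
  qed
qed

lemma nn_integral_layer_cake_square:
  assumes [measurable]: "Y \<in> borel_measurable M"
  shows "(\<integral>\<^sup>+t. ennreal (indicator {0<..} t * (2 * t * prob {\<omega>\<in>space M. t \<le> \<bar>Y \<omega>\<bar>})) \<partial>lborel)
    = (\<integral>\<^sup>+\<omega>. ennreal ((Y \<omega>)\<^sup>2) \<partial>M)"
proof -
  interpret pair_sigma_finite M lborel ..
  let ?f = "\<lambda>\<omega> t. ennreal (indicator {0..\<bar>Y \<omega>\<bar>} t * (2 * t))"
  have "(\<integral>\<^sup>+t. ennreal (indicator {0<..} t * (2 * t * prob {\<omega>\<in>space M. t \<le> \<bar>Y \<omega>\<bar>})) \<partial>lborel)
      = (\<integral>\<^sup>+t. (\<integral>\<^sup>+\<omega>. ?f \<omega> t \<partial>M) \<partial>lborel)"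
  proof (intro nn_integral_cong)
    fix t :: real
    show "ennreal (indicator {0<..} t * (2 * t * prob {\<omega>\<in>space M. t \<le> \<bar>Y \<omega>\<bar>})) = (\<integral>\<^sup>+\<omega>. ?f \<omega> t \<partial>M)"
    proof (cases "t > 0")
      case True
      have "(\<integral>\<^sup>+\<omega>. ?f \<omega> t \<partial>M) = (\<integral>\<^sup>+\<omega>. ennreal (2 * t) * indicator {\<omega>\<in>space M. t \<le> \<bar>Y \<omega>\<bar>} \<omega> \<partial>M)"
        using True by (intro nn_integral_cong) (auto simp: indicator_def)
      also have "\<dots> = ennreal (2 * t) * emeasure M {\<omega>\<in>space M. t \<le> \<bar>Y \<omega>\<bar>}"
        by (simp add: nn_integral_cmult_indicator)
      finally show ?thesis
        using True by (simp add: emeasure_eq_measure ennreal_mult)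
    qed (cases "t = 0"; auto simp: indicator_def)
  qed
  also have "\<dots> = (\<integral>\<^sup>+\<omega>. (\<integral>\<^sup>+t. ?f \<omega> t \<partial>lborel) \<partial>M)"
  proof (rule Fubini')
    have "(\<lambda>(\<omega>, t). ennreal (if 0 \<le> t \<and> t \<le> \<bar>Y \<omega>\<bar> then 2 * t else 0)) \<in> borel_measurable (M \<Otimes>\<^sub>M lborel)"
      by measurable
    thus "case_prod ?f \<in> borel_measurable (M \<Otimes>\<^sub>M lborel)"
      by (simp add: indicator_def split_beta' if_distrib)
  qed
  also have "\<dots> = (\<integral>\<^sup>+\<omega>. ennreal ((Y \<omega>)\<^sup>2) \<partial>M)"
  proof (intro nn_integral_cong)
    fix \<omega>
    have "((\<lambda>t. 2 * t) has_integral (\<bar>Y \<omega>\<bar>)\<^sup>2 - 0\<^sup>2) {0..\<bar>Y \<omega>\<bar>}"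
    proof (rule fundamental_theorem_of_calculus)
      fix x :: real
      show "((\<lambda>t. t\<^sup>2) has_vector_derivative 2 * x) (at x within {0..\<bar>Y \<omega>\<bar>})"
        by (auto intro!: derivative_eq_intros simp: has_real_derivative_iff_has_vector_derivative[symmetric])
    qed simp
    thus "(\<integral>\<^sup>+t. ?f \<omega> t \<partial>lborel) = ennreal ((Y \<omega>)\<^sup>2)"
      by (intro nn_integral_has_integral_lebesgue) auto
  qed
  finally show ?thesis .
qed

lemma symmetric0_nn_integral_tail_le:
  assumes [measurable]: "Y \<in> borel_measurable M" and sym: "symmetric0 (distr M borel Y)"
    and int2: "integrable M (\<lambda>\<omega>. (Y \<omega>)\<^sup>2)"
    and tail: "\<And>t. t > 0 \<Longrightarrow> L t \<le> prob {\<omega>\<in>space M. t \<le> Y \<omega>}"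
  shows "(\<integral>\<^sup>+t. ennreal (indicator {0<..} t * (4 * t * L t)) \<partial>lborel)
    \<le> ennreal (expectation (\<lambda>\<omega>. (Y \<omega>)\<^sup>2))"
proof -
  have "(\<integral>\<^sup>+t. ennreal (indicator {0<..} t * (4 * t * L t)) \<partial>lborel)
      \<le> (\<integral>\<^sup>+t. ennreal (indicator {0<..} t * (2 * t * prob {\<omega>\<in>space M. t \<le> \<bar>Y \<omega>\<bar>})) \<partial>lborel)"
  proof (intro nn_integral_mono ennreal_leI)
    fix t :: real
    show "indicator {0<..} t * (4 * t * L t)
        \<le> indicator {0<..} t * (2 * t * prob {\<omega>\<in>space M. t \<le> \<bar>Y \<omega>\<bar>})"
    proof (cases "t > 0")
      case True
      hence "4 * t * L t \<le> 4 * t * prob {\<omega>\<in>space M. t \<le> Y \<omega>}"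
        using tail[OF True] by (intro mult_left_mono) auto
      thus ?thesis
        using True symmetric0_prob_abs_ge[OF _ sym True] by simp
    qed simp
  qed
  also have "\<dots> = ennreal (expectation (\<lambda>\<omega>. (Y \<omega>)\<^sup>2))"
    unfolding nn_integral_layer_cake_square[OF assms(1)]
    by (rule nn_integral_eq_integral[OF int2]) simp
  finally show ?thesis .
qed

lemma symmetric_unimodal_tail_bound:
  assumes [measurable]: "Y \<in> borel_measurable M" and a: "a > 0"
    and uni: "unimodal (distr M borel Y)" and sym: "symmetric0 (distr M borel Y)"
    and int2: "integrable M (\<lambda>\<omega>. (Y \<omega>)\<^sup>2)" and V: "expectation (\<lambda>\<omega>. (Y \<omega>)\<^sup>2) \<le> V"
  shows "prob {\<omega>\<in>space M. a \<le> Y \<omega>} \<le> 1/2 - a / (2 * sqrt (a\<^sup>2 + 4 * V))"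
proof -
  obtain L where cv: "convex_on {0<..} L" and L: "\<And>t. t > 0 \<Longrightarrow>
      prob {\<omega>\<in>space M. t < Y \<omega>} \<le> L t \<and> L t \<le> prob {\<omega>\<in>space M. t \<le> Y \<omega>}"
    using unimodal_symmetric0_convex_tail[OF _ uni sym] by auto
  have "0 \<le> expectation (\<lambda>\<omega>. (Y \<omega>)\<^sup>2)"
    by (intro integral_nonneg_AE) simp
  hence V0: "0 \<le> V"
    using V by linarith
  have bounds: "0 \<le> L t \<and> L t \<le> 1/2" if "t > 0" for t
    using L[OF that] symmetric0_prob_ge_le_half[OF assms(1) sym that]
      measure_nonneg[of M "{\<omega>\<in>space M. t < Y \<omega>}"] by linarith
  have int: "(\<integral>\<^sup>+t. ennreal (indicator {0<..} t * (4 * t * L t)) \<partial>lborel) \<le> ennreal V"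
    using symmetric0_nn_integral_tail_le[OF _ sym int2, of L] L V by (auto intro: order_trans ennreal_leI)
  \<comment> \<open>\<open>L b\<close> dominates the tail at \<open>a\<close> only for \<open>b < a\<close>, because of a possible atom at \<open>a\<close>;
    hence the limit \<open>b \<rightarrow> a\<close>.\<close>
  have "b / (2 * sqrt (b\<^sup>2 + 4 * V)) \<le> 1/2 - prob {\<omega>\<in>space M. a \<le> Y \<omega>}" if "0 < b" "b < a" for b
  proof -
    have "prob {\<omega>\<in>space M. a \<le> Y \<omega>} \<le> prob {\<omega>\<in>space M. b < Y \<omega>}"
      using that by (intro finite_measure_mono) auto
    also have "\<dots> \<le> L b"
      using L \<open>0 < b\<close> by blast
    finally have "prob {\<omega>\<in>space M. a \<le> Y \<omega>} \<le> L b" .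
    thus ?thesis
      using convex_tail_margin[OF cv \<open>0 < b\<close> V0 bounds int] by simp
  qed
  hence "\<forall>\<^sub>F b in at_left a. b / (2 * sqrt (b\<^sup>2 + 4 * V)) \<le> 1/2 - prob {\<omega>\<in>space M. a \<le> Y \<omega>}"
    using eventually_at_left_real[OF a] by (auto elim: eventually_mono)
  moreover have "((\<lambda>b. b / (2 * sqrt (b\<^sup>2 + 4 * V))) \<longlongrightarrow> a / (2 * sqrt (a\<^sup>2 + 4 * V))) (at_left a)"
    using a V0 by (intro tendsto_intros) (auto simp: add_nonneg_eq_0_iff)
  ultimately have "a / (2 * sqrt (a\<^sup>2 + 4 * V)) \<le> 1/2 - prob {\<omega>\<in>space M. a \<le> Y \<omega>}"
    by (intro tendsto_upperbound) auto
  thus ?thesis by simp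
qed

lemma sgn_agrees_prob_ge:
  assumes [measurable]: "X \<in> borel_measurable M" and g: "g \<noteq> 0"
    and int: "integrable M X" and int2: "integrable M (\<lambda>\<omega>. (X \<omega>)\<^sup>2)"
    and mean: "expectation X = g" and var: "variance X \<le> \<sigma>\<^sup>2"
    and uni: "unimodal (distr M borel (\<lambda>\<omega>. X \<omega> - g))"
    and sym: "symmetric0 (distr M borel (\<lambda>\<omega>. X \<omega> - g))"
  shows "1/2 + \<bar>g\<bar> / (2 * sqrt (g\<^sup>2 + 4 * \<sigma>\<^sup>2)) \<le> prob {\<omega>\<in>space M. sgn (X \<omega>) = sgn g}"
proof -
  have "(\<lambda>\<omega>. (X \<omega> - g)\<^sup>2) = (\<lambda>\<omega>. (X \<omega>)\<^sup>2 + (g\<^sup>2 - 2 * g * X \<omega>))"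
    by (auto simp: fun_eq_iff power2_eq_square algebra_simps)
  hence "integrable M (\<lambda>\<omega>. (X \<omega> - g)\<^sup>2)"
    using int int2 by auto
  moreover have "expectation (\<lambda>\<omega>. (X \<omega> - g)\<^sup>2) \<le> \<sigma>\<^sup>2"
    using var mean by simp
  ultimately have tail: "prob {\<omega>\<in>space M. \<bar>g\<bar> \<le> X \<omega> - g} \<le> 1/2 - \<bar>g\<bar> / (2 * sqrt (g\<^sup>2 + 4 * \<sigma>\<^sup>2))"
    using symmetric_unimodal_tail_bound[OF _ _ uni sym, where a = "\<bar>g\<bar>" and V = "\<sigma>\<^sup>2"] g by simp
  have "prob {\<omega>\<in>space M. sgn (X \<omega>) \<noteq> sgn g} = prob {\<omega>\<in>space M. \<bar>g\<bar> \<le> X \<omega> - g}"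
  proof (cases "g > 0")
    case True
    hence "{\<omega>\<in>space M. sgn (X \<omega>) \<noteq> sgn g} = {\<omega>\<in>space M. X \<omega> - g \<le> - \<bar>g\<bar>}"
      by (auto simp: sgn_if)
    thus ?thesis
      using symmetric0_prob_le_neg[OF _ sym] by simp
  next
    case False
    hence "{\<omega>\<in>space M. sgn (X \<omega>) \<noteq> sgn g} = {\<omega>\<in>space M. \<bar>g\<bar> \<le> X \<omega> - g}"
      using g by (auto simp: sgn_if)
    thus ?thesis by simp
  qed
  moreover have "prob {\<omega>\<in>space M. sgn (X \<omega>) = sgn g} = 1 - prob {\<omega>\<in>space M. sgn (X \<omega>) \<noteq> sgn g}"
  proof -
    have "space M - {\<omega>\<in>space M. sgn (X \<omega>) = sgn g} = {\<omega>\<in>space M. sgn (X \<omega>) \<noteq> sgn g}"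
      by auto
    thus ?thesis
      using prob_compl[of "{\<omega>\<in>space M. sgn (X \<omega>) = sgn g}"] by simp
  qed
  ultimately show ?thesis
    using tail by simp
qed

end

section \<open>Majority votes of independent trials\<close>

lemma real_card_filter_eq_sum_indicator:
  assumes "finite I"
  shows "real (card {i\<in>I. x i \<in> A i}) = (\<Sum>i\<in>I. indicator (A i) (x i))"
  using assms by (simp add: indicator_def Collect_conj_eq)

lemma card_sgn_agree_le_half:
  fixes x :: "'i \<Rightarrow> real"
  assumes fin: "finite I" and g: "g \<noteq> 0" and vote: "sgn (\<Sum>i\<in>I. sgn (x i)) \<noteq> sgn g"
  shows "real (card {i\<in>I. sgn (x i) = sgn g}) \<le> real (card I) / 2"
proof (rule ccontr)
  assume more: "\<not> ?thesis"
  have s: "sgn g = 1 \<or> sgn g = -1"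
    using g by (auto simp: sgn_if)
  have "2 * of_bool (sgn (x i) = sgn g) - 1 \<le> sgn g * sgn (x i)" for i
    using s by (auto simp: sgn_if)
  hence "(\<Sum>i\<in>I. 2 * of_bool (sgn (x i) = sgn g) - 1) \<le> sgn g * (\<Sum>i\<in>I. sgn (x i))"
    unfolding sum_distrib_left by (rule sum_mono)
  moreover have "(\<Sum>i\<in>I. 2 * of_bool (sgn (x i) = sgn g) - 1)
      = 2 * real (card {i\<in>I. sgn (x i) = sgn g}) - real (card I)"
    using fin by (simp add: sum_subtractf sum_distrib_left[symmetric] Collect_conj_eq)
  ultimately have "0 < sgn g * (\<Sum>i\<in>I. sgn (x i))"
    using more by linarith
  hence "sgn (\<Sum>i\<in>I. sgn (x i)) = sgn g"
    using s by (auto simp: zero_less_mult_iff)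
  thus False
    using vote by contradiction
qed

lemma cantelli_bound_le:
  fixes n r w D :: real
  assumes n: "0 < n" and r: "0 < r" and w: "0 \<le> w" and D: "n * r \<le> D"
  shows "n * w / (n * w + D\<^sup>2) \<le> w / (w + n * r\<^sup>2)"
proof -
  have "0 < n * r"
    using n r by simp
  hence "(n * r)\<^sup>2 \<le> D\<^sup>2" "0 < (n * r)\<^sup>2"
    using D by (auto intro: power_mono)
  hence "n * w / (n * w + D\<^sup>2) \<le> n * w / (n * w + (n * r)\<^sup>2)"
    using n w by (intro divide_left_mono) (auto intro!: mult_pos_pos add_nonneg_pos)
  also have "n * w + (n * r)\<^sup>2 = n * (w + n * r\<^sup>2)"
    by (simp add: power2_eq_square algebra_simps)
  finally show ?thesis
    using n by simp
qed

lemma margin_majority_bound: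
  fixes a \<sigma> n :: real
  assumes a: "a > 0" and \<sigma>: "\<sigma> > 0" and n: "n > 0"
  defines "r \<equiv> a / (2 * sqrt (a\<^sup>2 + 4 * \<sigma>\<^sup>2))"
  shows "(1/4 - r\<^sup>2) / (1/4 - r\<^sup>2 + n * r\<^sup>2) \<le> \<sigma> / (a * sqrt n)"
proof -
  define S where "S = a\<^sup>2 + 4 * \<sigma>\<^sup>2"
  have S: "S > 0"
    unfolding S_def using a by (simp add: add_pos_nonneg)
  have r2: "r\<^sup>2 = a\<^sup>2 / (4 * S)"
    unfolding r_def S_def using S[unfolded S_def] by (simp add: power_divide power_mult_distrib)
  have "1/4 - r\<^sup>2 = \<sigma>\<^sup>2 / S"
    unfolding r2 using S by (simp add: S_def field_simps)
  hence "(1/4 - r\<^sup>2) / (1/4 - r\<^sup>2 + n * r\<^sup>2) = (4 * \<sigma>\<^sup>2 / (4 * S)) / ((4 * \<sigma>\<^sup>2 + n * a\<^sup>2) / (4 * S))"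
    unfolding r2 by (simp add: add_divide_distrib)
  also have "\<dots> = 4 * \<sigma>\<^sup>2 / (4 * \<sigma>\<^sup>2 + n * a\<^sup>2)"
    using S by simp
  also have "\<dots> \<le> \<sigma> / (a * sqrt n)"
  proof -
    have "0 \<le> (2 * \<sigma> - a * sqrt n)\<^sup>2"
      by simp
    hence "4 * \<sigma> * (a * sqrt n) \<le> 4 * \<sigma>\<^sup>2 + n * a\<^sup>2"
      using n by (simp add: power2_eq_square algebra_simps)
    hence "\<sigma> * (4 * \<sigma> * (a * sqrt n)) \<le> \<sigma> * (4 * \<sigma>\<^sup>2 + n * a\<^sup>2)"
      using \<sigma> by simp
    moreover have "0 < 4 * \<sigma>\<^sup>2 + n * a\<^sup>2" "0 < a * sqrt n"
      using \<sigma> a n by (simp_all add: add_pos_pos)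
    ultimately show ?thesis
      by (simp add: divide_le_eq le_divide_eq power2_eq_square mult_ac)
  qed
  finally show ?thesis .
qed

context prob_space
begin

lemma indep_vars_expectation_mult:
  fixes Y :: "'i \<Rightarrow> 'a \<Rightarrow> real"
  assumes ind: "indep_vars (\<lambda>_. borel) Y I" and "i \<in> I" "j \<in> I" "i \<noteq> j"
    and int: "integrable M (Y i)" "integrable M (Y j)"
  shows "integrable M (\<lambda>\<omega>. Y i \<omega> * Y j \<omega>)"
    and "expectation (\<lambda>\<omega>. Y i \<omega> * Y j \<omega>) = expectation (Y i) * expectation (Y j)"
proof -
  have ind2: "indep_vars (\<lambda>_. borel) Y {i, j}"
    using ind by (rule indep_vars_subset) (use assms in auto)
  have int2: "\<And>k. k \<in> {i, j} \<Longrightarrow> integrable M (Y k)"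
    using int by auto
  show "integrable M (\<lambda>\<omega>. Y i \<omega> * Y j \<omega>)"
    using indep_vars_integrable[OF _ ind2 int2] \<open>i \<noteq> j\<close> by simp
  show "expectation (\<lambda>\<omega>. Y i \<omega> * Y j \<omega>) = expectation (Y i) * expectation (Y j)"
    using indep_vars_lebesgue_integral[OF _ ind2 int2] \<open>i \<noteq> j\<close> by simp
qed

lemma indep_vars_expectation_sum_square:
  fixes Y :: "'i \<Rightarrow> 'a \<Rightarrow> real"
  assumes fin: "finite I" and ind: "indep_vars (\<lambda>_. borel) Y I"
    and int: "\<And>i. i \<in> I \<Longrightarrow> integrable M (Y i)"
    and int2: "\<And>i. i \<in> I \<Longrightarrow> integrable M (\<lambda>\<omega>. (Y i \<omega>)\<^sup>2)"
    and mean: "\<And>i. i \<in> I \<Longrightarrow> expectation (Y i) = 0"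
  shows "integrable M (\<lambda>\<omega>. (\<Sum>i\<in>I. Y i \<omega>)\<^sup>2)"
    and "expectation (\<lambda>\<omega>. (\<Sum>i\<in>I. Y i \<omega>)\<^sup>2) = (\<Sum>i\<in>I. expectation (\<lambda>\<omega>. (Y i \<omega>)\<^sup>2))"
proof -
  have square: "(\<Sum>i\<in>I. Y i \<omega>)\<^sup>2 = (\<Sum>i\<in>I. \<Sum>j\<in>I. Y i \<omega> * Y j \<omega>)" for \<omega>
    by (simp add: power2_eq_square sum_product)
  have int_mult: "integrable M (\<lambda>\<omega>. Y i \<omega> * Y j \<omega>)" if "i \<in> I" "j \<in> I" for i j
    using that int2[of i] indep_vars_expectation_mult(1)[OF ind that _ int[OF that(1)] int[OF that(2)]]
    by (cases "i = j") (auto simp: power2_eq_square)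
  show "integrable M (\<lambda>\<omega>. (\<Sum>i\<in>I. Y i \<omega>)\<^sup>2)"
    unfolding square using int_mult by auto
  have cross: "(\<Sum>j\<in>I. expectation (\<lambda>\<omega>. Y i \<omega> * Y j \<omega>)) = expectation (\<lambda>\<omega>. (Y i \<omega>)\<^sup>2)"
    if i: "i \<in> I" for i
  proof -
    have "expectation (\<lambda>\<omega>. Y i \<omega> * Y j \<omega>) = 0" if "j \<in> I - {i}" for j
      using indep_vars_expectation_mult(2)[OF ind i, of j] that int mean i by auto
    hence "(\<Sum>j\<in>I - {i}. expectation (\<lambda>\<omega>. Y i \<omega> * Y j \<omega>)) = 0"
      by simp
    thus ?thesis
      using sum.remove[OF fin i, of "\<lambda>j. expectation (\<lambda>\<omega>. Y i \<omega> * Y j \<omega>)"] by (simp add: power2_eq_square)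
  qed
  show "expectation (\<lambda>\<omega>. (\<Sum>i\<in>I. Y i \<omega>)\<^sup>2) = (\<Sum>i\<in>I. expectation (\<lambda>\<omega>. (Y i \<omega>)\<^sup>2))"
    unfolding square using int_mult cross by (simp add: Bochner_Integration.integral_sum)
qed

lemma prob_le_shifted_chebyshev:
  assumes int: "integrable M W" and int2: "integrable M (\<lambda>\<omega>. (W \<omega>)\<^sup>2)"
    and mean: "expectation W = 0" and D: "D > 0" and u: "0 \<le> u"
  shows "prob {\<omega>\<in>space M. W \<omega> \<le> - D} \<le> (u\<^sup>2 + expectation (\<lambda>\<omega>. (W \<omega>)\<^sup>2)) / (u + D)\<^sup>2"
proof -
  have [measurable]: "W \<in> borel_measurable M"
    using int by (rule borel_measurable_integrable)
  have square: "(u - W \<omega>)\<^sup>2 = u\<^sup>2 - 2 * u * W \<omega> + (W \<omega>)\<^sup>2" for \<omega>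
    by (simp add: power2_eq_square algebra_simps)
  have "prob {\<omega>\<in>space M. W \<omega> \<le> - D} = expectation (indicator {\<omega>\<in>space M. W \<omega> \<le> - D})"
    by simp
  also have "\<dots> \<le> expectation (\<lambda>\<omega>. (u - W \<omega>)\<^sup>2 / (u + D)\<^sup>2)"
  proof (intro integral_mono integrable_divide)
    show "integrable M (indicator {\<omega>\<in>space M. W \<omega> \<le> - D} :: 'a \<Rightarrow> real)"
      by (intro integrable_real_indicator) (auto simp: less_top[symmetric])
    show "integrable M (\<lambda>\<omega>. (u - W \<omega>)\<^sup>2)"
      unfolding square using int int2 by auto
    fix \<omega> assume "\<omega> \<in> space M"
    have "W \<omega> \<le> - D \<Longrightarrow> (u + D)\<^sup>2 \<le> (u - W \<omega>)\<^sup>2"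
      using u D by (intro power_mono) auto
    thus "indicator {\<omega>\<in>space M. W \<omega> \<le> - D} \<omega> \<le> (u - W \<omega>)\<^sup>2 / (u + D)\<^sup>2"
      using u D by (auto simp: indicator_def)
  qed
  also have "\<dots> = (u\<^sup>2 + expectation (\<lambda>\<omega>. (W \<omega>)\<^sup>2)) / (u + D)\<^sup>2"
    unfolding square using int int2 mean by (simp add: prob_space)
  finally show ?thesis .
qed

text \<open>The shift \<open>u = v / D\<close> minimises the shifted Chebyshev bound.\<close>
lemma cantelli_inequality:
  assumes int: "integrable M W" and int2: "integrable M (\<lambda>\<omega>. (W \<omega>)\<^sup>2)"
    and mean: "expectation W = 0" and var: "expectation (\<lambda>\<omega>. (W \<omega>)\<^sup>2) \<le> v" and D: "D > 0"
  shows "prob {\<omega>\<in>space M. W \<omega> \<le> - D} \<le> v / (v + D\<^sup>2)"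
proof -
  have "0 \<le> expectation (\<lambda>\<omega>. (W \<omega>)\<^sup>2)"
    by (intro integral_nonneg_AE) simp
  hence v: "0 \<le> v"
    using var by linarith
  define u where "u = v / D"
  have "prob {\<omega>\<in>space M. W \<omega> \<le> - D} \<le> (u\<^sup>2 + expectation (\<lambda>\<omega>. (W \<omega>)\<^sup>2)) / (u + D)\<^sup>2"
    using prob_le_shifted_chebyshev[OF int int2 mean D] v D unfolding u_def by simp
  also have "\<dots> \<le> (u\<^sup>2 + v) / (u + D)\<^sup>2"
    using var by (simp add: divide_right_mono)
  also have "\<dots> = v / (v + D\<^sup>2)"
  proof -
    have "u\<^sup>2 + v = v * (v + D\<^sup>2) / D\<^sup>2" "(u + D)\<^sup>2 = (v + D\<^sup>2)\<^sup>2 / D\<^sup>2"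
      unfolding u_def using D by (simp_all add: field_simps power2_eq_square)
    thus ?thesis
      using D v by (simp add: power2_eq_square add_nonneg_pos)
  qed
  finally show ?thesis .
qed

lemma trial_centered_moments:
  assumes [measurable]: "X \<in> measurable M N" "A \<in> sets N"
  defines "p \<equiv> prob {\<omega>\<in>space M. X \<omega> \<in> A}"
  defines "h \<equiv> \<lambda>\<omega>. indicator A (X \<omega>) - p"
  shows "integrable M h" and "integrable M (\<lambda>\<omega>. (h \<omega>)\<^sup>2)"
    and "expectation h = 0" and "expectation (\<lambda>\<omega>. (h \<omega>)\<^sup>2) = p * (1 - p)"
proof -
  have "integrable M (indicator {\<omega>\<in>space M. X \<omega> \<in> A} :: 'a \<Rightarrow> real)"
    by (intro integrable_real_indicator) (auto simp: less_top[symmetric])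
  moreover have "integrable M (\<lambda>\<omega>. indicator A (X \<omega>) :: real)
      \<longleftrightarrow> integrable M (indicator {\<omega>\<in>space M. X \<omega> \<in> A} :: 'a \<Rightarrow> real)"
    by (intro Bochner_Integration.integrable_cong) (simp_all add: indicator_def)
  ultimately have int: "integrable M (\<lambda>\<omega>. indicator A (X \<omega>) :: real)"
    by simp
  have "expectation (\<lambda>\<omega>. indicator A (X \<omega>) :: real)
      = expectation (indicator {\<omega>\<in>space M. X \<omega> \<in> A} :: 'a \<Rightarrow> real)"
    by (intro Bochner_Integration.integral_cong) (simp_all add: indicator_def)
  hence E: "expectation (\<lambda>\<omega>. indicator A (X \<omega>)) = p"
    unfolding p_def by simp
  have square: "(h \<omega>)\<^sup>2 = (1 - 2 * p) * indicator A (X \<omega>) + p\<^sup>2" for \<omega>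
    unfolding h_def by (simp add: indicator_def power2_eq_square algebra_simps)
  show "integrable M h"
    unfolding h_def using int by auto
  show "integrable M (\<lambda>\<omega>. (h \<omega>)\<^sup>2)"
    unfolding square using int by auto
  show "expectation h = 0"
    unfolding h_def using int E by (simp add: prob_space)
  show "expectation (\<lambda>\<omega>. (h \<omega>)\<^sup>2) = p * (1 - p)"
    unfolding square using int E by (simp add: prob_space algebra_simps power2_eq_square)
qed

lemma indep_trials_centered_sum:
  fixes X :: "'i \<Rightarrow> 'a \<Rightarrow> 'b" and N :: "'i \<Rightarrow> 'b measure"
  assumes fin: "finite I" and ind: "indep_vars N X I" and A: "\<And>i. i \<in> I \<Longrightarrow> A i \<in> sets (N i)"
  defines "p \<equiv> \<lambda>i. prob {\<omega>\<in>space M. X i \<omega> \<in> A i}"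
  defines "W \<equiv> \<lambda>\<omega>. \<Sum>i\<in>I. indicator (A i) (X i \<omega>) - p i"
  shows "integrable M W" and "integrable M (\<lambda>\<omega>. (W \<omega>)\<^sup>2)" and "expectation W = 0"
    and "expectation (\<lambda>\<omega>. (W \<omega>)\<^sup>2) = (\<Sum>i\<in>I. p i * (1 - p i))"
proof -
  define h where "h i \<omega> = indicator (A i) (X i \<omega>) - p i" for i \<omega>
  have X: "X i \<in> measurable M (N i)" if "i \<in> I" for i
    using ind that unfolding indep_vars_def by blast
  have trial: "integrable M (h i)" "integrable M (\<lambda>\<omega>. (h i \<omega>)\<^sup>2)"
      "expectation (h i) = 0" "expectation (\<lambda>\<omega>. (h i \<omega>)\<^sup>2) = p i * (1 - p i)" if "i \<in> I" for i
    using trial_centered_moments[OF X[OF that] A[OF that]] unfolding h_def p_def by simp_all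
  have "indep_vars (\<lambda>_. borel) h I"
    unfolding h_def[abs_def]
    by (rule indep_vars_compose2[OF ind, where Y = "\<lambda>i x. indicator (A i) x - p i"])
      (use A in \<open>auto intro!: borel_measurable_diff\<close>)
  note sum_square = indep_vars_expectation_sum_square[OF fin this trial(1,2,3)]
  have W: "W = (\<lambda>\<omega>. \<Sum>i\<in>I. h i \<omega>)"
    unfolding W_def h_def ..
  show "integrable M W" "expectation W = 0"
    unfolding W using trial(1,3) by (simp_all add: Bochner_Integration.integral_sum)
  show "integrable M (\<lambda>\<omega>. (W \<omega>)\<^sup>2)" "expectation (\<lambda>\<omega>. (W \<omega>)\<^sup>2) = (\<Sum>i\<in>I. p i * (1 - p i))"
    unfolding W using sum_square trial(4) by simp_all
qed

lemma majority_failure_prob: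
  fixes X :: "'i \<Rightarrow> 'a \<Rightarrow> 'b" and N :: "'i \<Rightarrow> 'b measure"
  assumes fin: "finite I" "I \<noteq> {}" and ind: "indep_vars N X I"
    and A: "\<And>i. i \<in> I \<Longrightarrow> A i \<in> sets (N i)" and r: "r > 0"
    and success: "\<And>i. i \<in> I \<Longrightarrow> 1/2 + r \<le> prob {\<omega>\<in>space M. X i \<omega> \<in> A i}"
  shows "prob {\<omega>\<in>space M. real (card {i\<in>I. X i \<omega> \<in> A i}) \<le> real (card I) / 2}
    \<le> (1/4 - r\<^sup>2) / (1/4 - r\<^sup>2 + real (card I) * r\<^sup>2)"
proof -
  define n where "n = real (card I)"
  have n: "n > 0"
    unfolding n_def using fin by (simp add: card_gt_0_iff)
  define p where "p i = prob {\<omega>\<in>space M. X i \<omega> \<in> A i}" for i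
  define W where "W \<omega> = (\<Sum>i\<in>I. indicator (A i) (X i \<omega>) - p i)" for \<omega>
  have W_moments: "integrable M W" "integrable M (\<lambda>\<omega>. (W \<omega>)\<^sup>2)" "expectation W = 0"
    "expectation (\<lambda>\<omega>. (W \<omega>)\<^sup>2) = (\<Sum>i\<in>I. p i * (1 - p i))"
    using indep_trials_centered_sum[OF fin(1) ind A] unfolding W_def[abs_def] p_def[abs_def] by simp_all
  have p_var: "p i * (1 - p i) \<le> 1/4 - r\<^sup>2" if "i \<in> I" for i
  proof -
    have "r\<^sup>2 \<le> (p i - 1/2)\<^sup>2"
      using success[OF that] r unfolding p_def by (intro power_mono) auto
    thus ?thesis
      by (simp add: power2_eq_square algebra_simps)
  qed
  obtain i where i: "i \<in> I"
    using fin(2) by blast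
  have "0 \<le> p i * (1 - p i)"
    unfolding p_def by (intro mult_nonneg_nonneg) auto
  hence w: "0 \<le> 1/4 - r\<^sup>2"
    using p_var[OF i] by linarith
  define D where "D = (\<Sum>i\<in>I. p i) - n / 2"
  have D: "n * r \<le> D"
    using sum_mono[of I "\<lambda>_. 1/2 + r" p] success unfolding D_def n_def p_def
    by (simp add: algebra_simps)
  have "{\<omega>\<in>space M. real (card {i\<in>I. X i \<omega> \<in> A i}) \<le> n / 2}
      \<subseteq> {\<omega>\<in>space M. W \<omega> \<le> - D}"
    unfolding W_def D_def using fin(1)
    by (auto simp: real_card_filter_eq_sum_indicator sum_subtractf)
  hence "prob {\<omega>\<in>space M. real (card {i\<in>I. X i \<omega> \<in> A i}) \<le> n / 2}
      \<le> prob {\<omega>\<in>space M. W \<omega> \<le> - D}"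
    using W_moments(1) by (intro finite_measure_mono) auto
  also have "\<dots> \<le> n * (1/4 - r\<^sup>2) / (n * (1/4 - r\<^sup>2) + D\<^sup>2)"
  proof (rule cantelli_inequality)
    show "expectation (\<lambda>\<omega>. (W \<omega>)\<^sup>2) \<le> n * (1/4 - r\<^sup>2)"
      unfolding W_moments(4) n_def using sum_mono[OF p_var] by simp
    show "0 < D"
      using D n r by (smt (verit) mult_pos_pos)
  qed (use W_moments in auto)
  also have "\<dots> \<le> (1/4 - r\<^sup>2) / (1/4 - r\<^sup>2 + n * r\<^sup>2)"
    using cantelli_bound_le[OF n r w D] .
  finally show ?thesis
    unfolding n_def .
qed

lemma prob_sgn_vote_wrong_le:
  fixes X :: "'i \<Rightarrow> 'a \<Rightarrow> real"
  assumes fin: "finite I" and g: "g \<noteq> 0" and X: "\<And>i. i \<in> I \<Longrightarrow> X i \<in> borel_measurable M"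
  shows "prob {\<omega>\<in>space M. sgn (\<Sum>i\<in>I. sgn (X i \<omega>)) \<noteq> sgn g}
    \<le> prob {\<omega>\<in>space M. real (card {i\<in>I. sgn (X i \<omega>) = sgn g}) \<le> real (card I) / 2}"
proof (rule finite_measure_mono)
  have [measurable]: "X i \<in> borel_measurable M" if "i \<in> I" for i
    using X that .
  have "real (card {i\<in>I. sgn (X i \<omega>) = sgn g}) = (\<Sum>i\<in>I. indicator {x. sgn x = sgn g} (X i \<omega>))" for \<omega>
    using real_card_filter_eq_sum_indicator[OF fin, of "\<lambda>i. X i \<omega>" "\<lambda>_. {x. sgn x = sgn g}"] by simp
  thus "{\<omega>\<in>space M. real (card {i\<in>I. sgn (X i \<omega>) = sgn g}) \<le> real (card I) / 2} \<in> events"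
    by (simp only:) measurable
  show "{\<omega>\<in>space M. sgn (\<Sum>i\<in>I. sgn (X i \<omega>)) \<noteq> sgn g}
      \<subseteq> {\<omega>\<in>space M. real (card {i\<in>I. sgn (X i \<omega>) = sgn g}) \<le> real (card I) / 2}"
    using card_sgn_agree_le_half[OF fin g] by auto
qed

end

theorem mainTheorem6:
  fixes P :: "'a measure" and X :: "nat \<Rightarrow> 'a \<Rightarrow> real"
    and g \<sigma> :: real and M :: nat
  assumes "prob_space P"
    and "g \<noteq> 0" and "\<sigma> > 0" and "M \<ge> 1"
    and "\<And>m. m \<in> {1..M} \<Longrightarrow> X m \<in> borel_measurable P"
    and "prob_space.indep_vars P (\<lambda>_. borel) X {1..M}"
    and "\<And>m. m \<in> {1..M} \<Longrightarrow> integrable P (X m)"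
    and "\<And>m. m \<in> {1..M} \<Longrightarrow> integrable P (\<lambda>\<omega>. (X m \<omega>)\<^sup>2)"
    and "\<And>m. m \<in> {1..M} \<Longrightarrow> prob_space.expectation P (X m) = g"
    and "\<And>m. m \<in> {1..M} \<Longrightarrow> prob_space.variance P (X m) \<le> \<sigma>\<^sup>2"
    and "\<And>m. m \<in> {1..M} \<Longrightarrow> unimodal (distr P borel (\<lambda>\<omega>. X m \<omega> - g))"
    and "\<And>m. m \<in> {1..M} \<Longrightarrow> symmetric0 (distr P borel (\<lambda>\<omega>. X m \<omega> - g))"
  shows "\<bar>g\<bar> * measure P {\<omega> \<in> space P. sgn (\<Sum>m=1..M. sgn (X m \<omega>)) \<noteq> sgn g}
           \<le> \<sigma> / sqrt (real M)
       \<and> measure P {\<omega> \<in> space P. real (card {m \<in> {1..M}. sgn (X m \<omega>) = sgn g}) \<le> real M / 2}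
           \<le> 1 / (sqrt (real M) * (\<bar>g\<bar> / \<sigma>))"
proof -
  interpret prob_space P by fact
  define r where "r = \<bar>g\<bar> / (2 * sqrt (\<bar>g\<bar>\<^sup>2 + 4 * \<sigma>\<^sup>2))"
  have "r > 0"
    unfolding r_def using assms(2) by (simp add: add_pos_nonneg)
  moreover have "1/2 + r \<le> prob {\<omega>\<in>space P. X m \<omega> \<in> {x. sgn x = sgn g}}" if "m \<in> {1..M}" for m
    using sgn_agrees_prob_ge[OF assms(5)[OF that] assms(2) assms(7-12)[OF that]] unfolding r_def by simp
  ultimately have "prob {\<omega>\<in>space P. real (card {m\<in>{1..M}. sgn (X m \<omega>) = sgn g}) \<le> real M / 2}
      \<le> (1/4 - r\<^sup>2) / (1/4 - r\<^sup>2 + real M * r\<^sup>2)"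
    using majority_failure_prob[OF _ _ assms(6), of "\<lambda>_. {x. sgn x = sgn g}" r] assms(4) by simp
  also have "\<dots> \<le> \<sigma> / (\<bar>g\<bar> * sqrt (real M))"
    unfolding r_def using margin_majority_bound[of "\<bar>g\<bar>" \<sigma> "real M"] assms(2-4) by simp
  finally have majority: "prob {\<omega>\<in>space P. real (card {m\<in>{1..M}. sgn (X m \<omega>) = sgn g}) \<le> real M / 2}
      \<le> \<sigma> / (\<bar>g\<bar> * sqrt (real M))" .
  with prob_sgn_vote_wrong_le[of "{1..M}" g X] assms(2,5)
  have "\<bar>g\<bar> * prob {\<omega>\<in>space P. sgn (\<Sum>m=1..M. sgn (X m \<omega>)) \<noteq> sgn g}
      \<le> \<bar>g\<bar> * (\<sigma> / (\<bar>g\<bar> * sqrt (real M)))"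
    by (intro mult_left_mono) auto
  thus ?thesis
    using majority assms(2) by (simp add: mult.commute)
qed

end
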